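(* Let $g\geqslant0$ be even and $i\geqslant0$ an integer. Then: (i) there exists $w_{g,i}\in\mathbb{C}[\alpha,\gamma]$, a unit modulo $J_g^+$, such that $w_{g,i}\gamma^i\zeta^+_{g-2i-1}\equiv\gamma^{i+1}\zeta^+_{g-2i-2}\pmod{J_g^+}$; (ii) there exists $x_{g,i}\in\mathbb{C}[\alpha,\gamma]$, a unit modulo $J_g^+$, such that $\alpha\, x_{g,i}\gamma^i\zeta^+_{g-2i-1}\equiv\gamma^{i+1}\zeta^+_{g-2i-3}\pmod{J_g^+}$ if $i$ is even, and $x_{g,i}\gamma^i\zeta^+_{g-2i-1}\equiv\alpha\,\gamma^{i+1}\zeta^+_{g-2i-3}\pmod{J_g^+}$ if $i$ is odd.
   Context: $\zeta_k^+\in\mathbb{C}[\alpha,\gamma]$: $\zeta^+_i=0$ for $i<0$, $\zeta^+_0=1$, $\zeta^+_{k+1}=\alpha\zeta^+_k+16k^2\zeta^+_{k-1}+2k(k-1)\gamma\zeta^+_{k-2}$ for $k$ even and $\zeta^+_{k+1}=\alpha\zeta^+_k+2k(k-1)\gamma\zeta^+_{k-2}$ for $k$ odd ($k\geqslant0$); $J^+_k=(\zeta^+_k,\zeta^+_{k+1},\zeta^+_{k+2})$. A unit modulo $J$ is an element whose image in $\mathbb{C}[\alpha,\gamma]/J$ is invertible. *)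

theory Defs
  imports "HOL-Computational_Algebra.Polynomial"
begin

text \<open>The ring C[alpha,gamma] is modelled as (complex poly) poly:
  polynomials in gamma whose coefficients are polynomials in alpha.\<close>

type_synonym cpoly2 = "complex poly poly"

definition alpha :: cpoly2 where "alpha = [:[:0, 1:]:]"
definition gamma :: cpoly2 where "gamma = [:0, 1:]"

fun zeta_nat :: "nat \<Rightarrow> cpoly2" where
  "zeta_nat 0 = 1"
| "zeta_nat (Suc k) =
     alpha * zeta_nat k
     + (if even k then of_nat (16 * k^2) * (if k \<ge> 1 then zeta_nat (k - 1) else 0) else 0)
     + of_nat (2 * k * (k - 1)) * gamma * (if k \<ge> 2 then zeta_nat (k - 2) else 0)"

definition zeta :: "int \<Rightarrow> cpoly2" where
  "zeta i = (if i < 0 then 0 else zeta_nat (nat i))"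

definition in_J :: "nat \<Rightarrow> cpoly2 \<Rightarrow> bool" where
  "in_J k x \<longleftrightarrow> (\<exists>p q r. x = p * zeta (int k) + q * zeta (int k + 1) + r * zeta (int k + 2))"

definition cong_J :: "nat \<Rightarrow> cpoly2 \<Rightarrow> cpoly2 \<Rightarrow> bool" where
  "cong_J k x y \<longleftrightarrow> in_J k (x - y)"

definition unit_mod_J :: "nat \<Rightarrow> cpoly2 \<Rightarrow> bool" where
  "unit_mod_J k u \<longleftrightarrow> (\<exists>v. cong_J k (u * v) 1)"

end

theory Submission
  imports Defs "HOL-Computational_Algebra.Fundamental_Theorem_Algebra" "HOL-Computational_Algebra.Polynomial_Factorial"
    "HOL-Computational_Algebra.Field_as_Ring"
begin

text \<open>
  Write \<open>A\<^sub>i = \<gamma>\<^sup>i \<zeta>\<^sup>+\<^sub>g\<^sub>-\<^sub>2\<^sub>i\<^sub>-\<^sub>1\<close> and \<open>B\<^sub>i = \<gamma>\<^sup>i\<^sup>+\<^sup>1 \<zeta>\<^sup>+\<^sub>g\<^sub>-\<^sub>2\<^sub>i\<^sub>-\<^sub>2\<close>. The recursion for \<open>\<zeta>\<^sup>+\<close>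
  gives \<open>B\<^sub>i = \<alpha> A\<^sub>i\<^sub>+\<^sub>1 + c A\<^sub>i\<^sub>+\<^sub>2\<close> and \<open>\<gamma> A\<^sub>i = \<alpha> B\<^sub>i + c' A\<^sub>i\<^sub>+\<^sub>1 + c'' B\<^sub>i\<^sub>+\<^sub>1\<close> with integer
  constants, and descending through the recursion shows \<open>\<gamma>\<^sup>m \<zeta>\<^sup>+\<^sub>g\<^sub>-\<^sub>j \<in> J\<^sup>+\<^sub>g\<close> for \<open>j < 2m\<close>; in
  particular \<open>\<gamma> A\<^sub>i \<in> J\<^sup>+\<^sub>g\<close>. Starting from \<open>i = 0\<close>, these relations produce polynomials
  \<open>N, D, N', D'\<close> in \<open>\<alpha>\<^sup>2\<close> with \<open>D B\<^sub>i \<equiv> N A\<^sub>i\<close> and \<open>D' A\<^sub>i\<^sub>+\<^sub>1 \<equiv> \<alpha> N' A\<^sub>i\<close> (\<open>i\<close> even) or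
  \<open>\<alpha> D' A\<^sub>i\<^sub>+\<^sub>1 \<equiv> N' A\<^sub>i\<close> (\<open>i\<close> odd).

  Modulo \<open>J\<^sup>+\<^sub>g\<close>, \<open>(\<zeta>\<^sup>+\<^sub>g\<^sub>-\<^sub>1)\<^sup>2\<close>, \<open>\<gamma> \<zeta>\<^sup>+\<^sub>g\<^sub>-\<^sub>1\<close> and a power of \<open>\<gamma>\<close> vanish, so an element is a unit
  once its value at \<open>\<gamma> = 0\<close> has no common root with \<open>\<zeta>\<^sup>+\<^sub>g\<^sub>-\<^sub>1(\<alpha>, 0) = \<alpha> \<Prod>(\<alpha>\<^sup>2 + 64 j\<^sup>2)\<close>,
  whose roots have \<open>\<alpha>\<^sup>2 \<le> 0\<close>. At \<open>\<alpha>\<^sup>2 = -s \<le> 0\<close> the recursion defining \<open>N, D, N', D'\<close>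
  preserves a sign pattern which keeps them nonzero; hence they are units, and \<open>w = N/D\<close>,
  \<open>x = N'/D'\<close> do the job. At the last index \<open>2i + 2 = g\<close> one has \<open>A\<^sub>i\<^sub>+\<^sub>1 = 0\<close> and \<open>D' = 0\<close>;
  there the congruence for \<open>N'\<close> alone gives the claim with \<open>x = 1\<close>.
\<close>

section \<open>The ideal \<open>J\<^sup>+\<^sub>k\<close>\<close>

lemma in_J_0: "in_J k 0"
  unfolding in_J_def by (intro exI[of _ 0]) simp

lemma in_J_add:
  assumes "in_J k x" "in_J k y" shows "in_J k (x + y)"
proof -
  obtain p q r p' q' r' where
    "x = p * zeta (int k) + q * zeta (int k + 1) + r * zeta (int k + 2)"
    "y = p' * zeta (int k) + q' * zeta (int k + 1) + r' * zeta (int k + 2)"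
    using assms unfolding in_J_def by blast
  then have "x + y = (p + p') * zeta (int k) + (q + q') * zeta (int k + 1) + (r + r') * zeta (int k + 2)"
    by (simp add: algebra_simps)
  then show ?thesis unfolding in_J_def by blast
qed

lemma in_J_mult:
  assumes "in_J k x" shows "in_J k (y * x)"
proof -
  obtain p q r where "x = p * zeta (int k) + q * zeta (int k + 1) + r * zeta (int k + 2)"
    using assms unfolding in_J_def by blast
  then have "y * x = (y * p) * zeta (int k) + (y * q) * zeta (int k + 1) + (y * r) * zeta (int k + 2)"
    by (simp add: algebra_simps)
  then show ?thesis unfolding in_J_def by blast
qed

lemma in_J_uminus: "in_J k x \<Longrightarrow> in_J k (- x)"
  using in_J_mult[of k x "-1"] by simp

lemma in_J_uminus_iff: "in_J k (- x) \<longleftrightarrow> in_J k x"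
  using in_J_uminus[of k x] in_J_uminus[of k "- x"] by auto

lemma in_J_diff: "in_J k x \<Longrightarrow> in_J k y \<Longrightarrow> in_J k (x - y)"
  using in_J_add[of k x "- y"] in_J_uminus[of k y] by simp

lemma in_J_generators:
  "in_J k (zeta (int k))" "in_J k (zeta (int k + 1))" "in_J k (zeta (int k + 2))"
  unfolding in_J_def
  by (intro exI[of _ 1] exI[of _ 0], simp)
     (intro exI[of _ 0] exI[of _ 1] exI[of _ 0], simp, intro exI[of _ 0] exI[of _ 1], simp)

lemma in_J_pow_diff: "in_J k (x - y) \<Longrightarrow> in_J k (x ^ n - y ^ n)"
proof (induction n)
  case (Suc n)
  have "x ^ Suc n - y ^ Suc n = x * (x ^ n - y ^ n) + y ^ n * (x - y)"
    by (simp add: algebra_simps)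
  then show ?case using Suc by (simp add: in_J_add in_J_mult)
qed (simp add: in_J_0)

lemma unit_mod_J_iff: "unit_mod_J k u \<longleftrightarrow> (\<exists>v. in_J k (u * v - 1))"
  unfolding unit_mod_J_def cong_J_def ..

lemma unit_mod_J_1: "unit_mod_J k 1"
  unfolding unit_mod_J_iff by (rule exI[of _ 1]) (simp add: in_J_0)

lemma unit_mod_J_of_int:
  assumes "n \<noteq> 0" shows "unit_mod_J k (of_int n)"
proof -
  have "(of_int n :: cpoly2) * [:[:inverse (of_int n):]:] = 1"
    using assms by (simp add: of_int_poly one_pCons)
  then show ?thesis unfolding unit_mod_J_iff by (metis diff_self in_J_0)
qed

lemma unit_mod_J_mult: "unit_mod_J k a \<Longrightarrow> unit_mod_J k b \<Longrightarrow> unit_mod_J k (a * b)"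
proof -
  assume "unit_mod_J k a" "unit_mod_J k b"
  then obtain v w where v: "in_J k (a * v - 1)" and w: "in_J k (b * w - 1)"
    unfolding unit_mod_J_iff by blast
  have "in_J k ((b * w) * (a * v - 1) + (b * w - 1))" by (rule in_J_add[OF in_J_mult[OF v] w])
  also have "(b * w) * (a * v - 1) + (b * w - 1) = a * b * (v * w) - 1"
    by (simp add: algebra_simps)
  finally show ?thesis unfolding unit_mod_J_iff by blast
qed

lemma unit_mod_J_factor: "unit_mod_J k (u * v) \<Longrightarrow> unit_mod_J k u"
  unfolding unit_mod_J_iff by (metis mult.assoc)

lemma unit_mod_J_inverse: "in_J k (u * v - 1) \<Longrightarrow> unit_mod_J k v"
  unfolding unit_mod_J_iff by (rule exI[of _ u]) (simp add: mult.commute)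

lemma in_J_cancel_unit:
  assumes "unit_mod_J k u" "in_J k (u * x)" shows "in_J k x"
proof -
  obtain v where v: "in_J k (u * v - 1)" using assms(1) unfolding unit_mod_J_iff by blast
  have "x = v * (u * x) - x * (u * v - 1)" by (simp add: algebra_simps)
  then show ?thesis using in_J_diff[OF in_J_mult[OF assms(2)] in_J_mult[OF v]] by metis
qed

lemma in_J_cancel_of_int: "in_J k (of_int n * x) \<Longrightarrow> n \<noteq> 0 \<Longrightarrow> in_J k x"
  using in_J_cancel_unit unit_mod_J_of_int by blast

lemma unit_mod_J_one_minus_nilpotent:
  assumes "in_J k (t ^ n)" shows "unit_mod_J k (1 - t)"
proof -
  have "(1 - t) * (\<Sum>i<n. t ^ i) - 1 = - (t ^ n)"
    by (simp add: one_diff_power_eq[symmetric])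
  then show ?thesis unfolding unit_mod_J_iff using in_J_uminus[OF assms] by metis
qed

section \<open>The recursion for \<open>\<zeta>\<^sup>+\<close> and powers of \<open>\<gamma>\<close> in \<open>J\<^sup>+\<^sub>g\<close>\<close>

definition rec_coeff1 :: "int \<Rightarrow> int" where "rec_coeff1 K = 16 * K\<^sup>2"
definition rec_coeff2 :: "int \<Rightarrow> int" where "rec_coeff2 K = 2 * K * (K - 1)"

lemma zeta_neg: "i < 0 \<Longrightarrow> zeta i = 0"
  unfolding zeta_def by simp

lemma zeta_rec:
  fixes K :: int assumes "K \<ge> 0"
  shows "zeta (K + 1) = alpha * zeta K + (if even K then of_int (rec_coeff1 K) * zeta (K - 1) else 0)
     + of_int (rec_coeff2 K) * gamma * zeta (K - 2)"
proof -
  obtain k where k: "K = int k" using assms nonneg_eq_int by blast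
  have "zeta (int k - 1) = (if k \<ge> 1 then zeta_nat (k - 1) else 0)"
       "zeta (int k - 2) = (if k \<ge> 2 then zeta_nat (k - 2) else 0)"
       "zeta (int k + 1) = zeta_nat (Suc k)" "zeta (int k) = zeta_nat k"
    unfolding zeta_def by (auto simp: nat_diff_distrib nat_add_distrib)
  moreover have "(of_nat (2 * k * (k - 1)) :: cpoly2) = of_int (2 * int k * (int k - 1))"
    by (cases k) (auto simp: algebra_simps)
  ultimately show ?thesis
    unfolding k rec_coeff1_def rec_coeff2_def by (auto simp: even_of_nat[symmetric])
qed

lemma zeta_rec_gamma_term:
  fixes K :: int assumes "K \<ge> 0"
  shows "of_int (rec_coeff2 K) * (gamma ^ Suc m * zeta (K - 2)) =
    gamma ^ m * zeta (K + 1) - alpha * (gamma ^ m * zeta K)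
    - (if even K then of_int (rec_coeff1 K) * (gamma ^ m * zeta (K - 1)) else 0)"
  unfolding zeta_rec[OF assms] by (simp add: algebra_simps)

lemma rec_coeff2_pos: "K \<ge> 2 \<Longrightarrow> rec_coeff2 K > 0"
  unfolding rec_coeff2_def by simp

lemma gamma_zeta_pred_in_J:
  assumes "even g" "g \<ge> 2" shows "in_J g (gamma * zeta (int g - 1))"
proof -
  have "in_J g (zeta (int g + 2) - alpha * zeta (int g + 1))"
    by (intro in_J_diff in_J_mult in_J_generators)
  also have "zeta (int g + 2) - alpha * zeta (int g + 1) =
      of_int (rec_coeff2 (int g + 1)) * (gamma * zeta (int g - 1))"
    using zeta_rec_gamma_term[of "int g + 1" 0] assms by (simp add: add.assoc)
  finally show ?thesis
    by (rule in_J_cancel_of_int) (use rec_coeff2_pos[of "int g + 1"] assms in simp)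
qed

lemma zeta_pred_relation_in_J:
  assumes "even g"
  shows "in_J g (of_int (rec_coeff1 (int g)) * zeta (int g - 1)
                 + of_int (rec_coeff2 (int g)) * gamma * zeta (int g - 2))"
proof -
  have "in_J g (zeta (int g + 1) - alpha * zeta (int g))"
    by (intro in_J_diff in_J_mult in_J_generators)
  then show ?thesis using zeta_rec[of "int g"] assms by simp
qed

lemma gamma_sq_zeta_pred2_in_J:
  assumes "even g" "g \<ge> 2" shows "in_J g (gamma\<^sup>2 * zeta (int g - 2))"
proof -
  let ?c1 = "of_int (rec_coeff1 (int g)) :: cpoly2"
  have "in_J g (gamma * (?c1 * zeta (int g - 1) + of_int (rec_coeff2 (int g)) * gamma * zeta (int g - 2))
      - ?c1 * (gamma * zeta (int g - 1)))"
    by (intro in_J_diff in_J_mult zeta_pred_relation_in_J gamma_zeta_pred_in_J assms)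
  also have "\<dots> = of_int (rec_coeff2 (int g)) * (gamma\<^sup>2 * zeta (int g - 2))"
    by (simp add: algebra_simps power2_eq_square)
  finally show ?thesis
    by (rule in_J_cancel_of_int) (use rec_coeff2_pos[of "int g"] assms in simp)
qed

lemma gamma_zeta_index_descent:
  assumes "K \<ge> 2" "in_J g (gamma ^ m * zeta (K + 1))" "in_J g (gamma ^ m * zeta K)"
    "even K \<Longrightarrow> in_J g (gamma ^ m * zeta (K - 1))"
  shows "in_J g (gamma ^ Suc m * zeta (K - 2))"
proof -
  have "in_J g (gamma ^ m * zeta (K + 1) - alpha * (gamma ^ m * zeta K)
      - (if even K then of_int (rec_coeff1 K) * (gamma ^ m * zeta (K - 1)) else 0))"
    using assms by (cases "even K") (simp_all add: in_J_diff in_J_mult in_J_0)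
  also have "\<dots> = of_int (rec_coeff2 K) * (gamma ^ Suc m * zeta (K - 2))"
    by (rule zeta_rec_gamma_term[symmetric]) (use assms(1) in simp)
  finally show ?thesis
    by (rule in_J_cancel_of_int) (use rec_coeff2_pos[OF assms(1)] in simp)
qed

text \<open>Each application of the recursion trades two steps of the index for one power of \<open>\<gamma>\<close>.\<close>

lemma gamma_pow_zeta_in_J:
  assumes "even g" "g \<ge> 2"
  shows "j < 2 * m \<Longrightarrow> in_J g (gamma ^ m * zeta (int g - int j))"
proof (induction j arbitrary: m rule: less_induct)
  case (less j)
  consider "j = 0" | "j = 1" | "j = 2" | "j \<ge> 3" by linarith
  then show ?case
  proof cases
    case 1
    then show ?thesis using in_J_mult[OF in_J_generators(1)] by simp
  next
    case 2
    then have "gamma ^ m * zeta (int g - int j) = gamma ^ (m - 1) * (gamma * zeta (int g - 1))"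
      using less.prems by (cases m) auto
    then show ?thesis using in_J_mult[OF gamma_zeta_pred_in_J[OF assms]] by simp
  next
    case 3
    then have "m = (m - 2) + 2" using less.prems by simp
    then have "gamma ^ m * zeta (int g - int j) = gamma ^ (m - 2) * (gamma\<^sup>2 * zeta (int g - 2))"
      using 3 by (metis mult.assoc of_nat_numeral power_add)
    then show ?thesis using in_J_mult[OF gamma_sq_zeta_pred2_in_J[OF assms]] by simp
  next
    case 4
    define K where "K = int g - int j + 2"
    obtain m' where m: "m = Suc m'" using less.prems by (cases m) auto
    have IH: "in_J g (gamma ^ m' * zeta (int g - int j'))" if "j' < j" "j' < 2 * m'" for j'
      using less.IH that by blast
    have idx: "int g - int (j - 3) = K + 1" "int g - int (j - 2) = K" "int g - int (j - 1) = K - 1"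
      "K - 2 = int g - int j"
      using 4 unfolding K_def by auto
    show ?thesis
    proof (cases "K \<ge> 2")
      case False
      then show ?thesis unfolding K_def by (simp add: zeta_neg in_J_0)
    next
      case True
      have "in_J g (gamma ^ m' * zeta (int g - int (j - 3)))" "in_J g (gamma ^ m' * zeta (int g - int (j - 2)))"
        by (rule IH; use 4 less.prems m in simp)+
      moreover have "in_J g (gamma ^ m' * zeta (int g - int (j - 1)))" if "even K"
      proof (rule IH)
        show "j - 1 < 2 * m'"
          using that assms(1) less.prems 4 unfolding K_def m by presburger
      qed (use 4 in simp)
      ultimately show ?thesis
        using gamma_zeta_index_descent[OF True] unfolding idx m by blast
    qed
  qed
qed

section \<open>A criterion for units modulo \<open>J\<^sup>+\<^sub>g\<close>\<close>

definition zeta_gamma0 :: "nat \<Rightarrow> complex poly" where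
  "zeta_gamma0 k = coeff (zeta_nat k) 0"

definition eval_at :: "complex \<Rightarrow> cpoly2 \<Rightarrow> complex" where
  "eval_at z u = poly (coeff u 0) z"

lemma eval_at_simps:
  "eval_at z (x + y) = eval_at z x + eval_at z y" "eval_at z (x * y) = eval_at z x * eval_at z y"
  "eval_at z (- x) = - eval_at z x" "eval_at z (x - y) = eval_at z x - eval_at z y"
  "eval_at z (of_int k) = of_int k" "eval_at z (x ^ n) = eval_at z x ^ n"
  "eval_at z 1 = 1" "eval_at z alpha = z"
  unfolding eval_at_def alpha_def
  by (simp_all add: coeff_mult_0 of_int_poly) (induction n, simp_all add: coeff_mult_0)

lemma zeta_gamma0_Suc:
  "zeta_gamma0 (Suc k) = [:0, 1:] * zeta_gamma0 k
     + (if even k \<and> k \<ge> 1 then of_nat (16 * k\<^sup>2) * zeta_gamma0 (k - 1) else 0)"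
proof -
  have "coeff alpha 0 = [:0, 1:]" "coeff gamma 0 = 0" unfolding alpha_def gamma_def by simp_all
  then show ?thesis unfolding zeta_gamma0_def by (simp add: coeff_mult_0 of_nat_poly del: of_nat_mult)
qed

lemma zeta_gamma0_odd_Suc:
  "zeta_gamma0 (2 * m + 3) = ([:0, 1:]\<^sup>2 + of_nat (64 * (m + 1)\<^sup>2)) * zeta_gamma0 (2 * m + 1)"
proof -
  have "zeta_gamma0 (2 * m + 3) = [:0, 1:] * zeta_gamma0 (2 * m + 2)
      + of_nat (16 * (2 * m + 2)\<^sup>2) * zeta_gamma0 (2 * m + 1)"
    using zeta_gamma0_Suc[of "2 * m + 2"] by (simp add: numeral_3_eq_3 del: of_nat_mult)
  moreover have "zeta_gamma0 (2 * m + 2) = [:0, 1:] * zeta_gamma0 (2 * m + 1)"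
    using zeta_gamma0_Suc[of "2 * m + 1"] by simp
  moreover have "(of_nat (16 * (2 * m + 2)\<^sup>2) :: complex poly) = of_nat (64 * (m + 1)\<^sup>2)"
    by (simp add: power2_eq_square algebra_simps)
  ultimately show ?thesis by (simp add: algebra_simps power2_eq_square)
qed

lemma zeta_gamma0_odd_roots:
  "poly (zeta_gamma0 (2 * m + 1)) z = 0 \<Longrightarrow> \<exists>s\<ge>0. z\<^sup>2 = - complex_of_real s"
proof (induction m)
  case 0
  then have "z = 0" using zeta_gamma0_Suc[of 0] by (simp add: zeta_gamma0_def)
  then show ?case by (intro exI[of _ 0]) simp
next
  case (Suc m)
  then have "z\<^sup>2 + of_nat (64 * (m + 1)\<^sup>2) = 0 \<or> poly (zeta_gamma0 (2 * m + 1)) z = 0"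
    using zeta_gamma0_odd_Suc[of m] by (simp add: numeral_3_eq_3 of_nat_poly)
  then show ?case
  proof
    assume "z\<^sup>2 + of_nat (64 * (m + 1)\<^sup>2) = 0"
    then have "z\<^sup>2 = - complex_of_real (real (64 * (m + 1)\<^sup>2))" by (simp add: eq_neg_iff_add_eq_0)
    then show ?thesis by (intro exI[of _ "real (64 * (m + 1)\<^sup>2)"]) simp
  qed (rule Suc.IH)
qed

lemma zeta_gamma0_odd_nonzero: "zeta_gamma0 (2 * m + 1) \<noteq> 0"
proof
  assume "zeta_gamma0 (2 * m + 1) = 0"
  then obtain s where "s \<ge> 0" "(1::complex)\<^sup>2 = - complex_of_real s"
    using zeta_gamma0_odd_roots[of m 1] by auto
  then have "(1::real) = - s" by (metis of_real_1 of_real_minus of_real_eq_iff power_one)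
  with \<open>s \<ge> 0\<close> show False by simp
qed

lemma bezout_if_no_common_root:
  fixes p q :: "complex poly"
  assumes "q \<noteq> 0" "\<And>z. poly q z = 0 \<Longrightarrow> poly p z \<noteq> 0"
  shows "\<exists>a b. a * p + b * q = 1"
proof -
  define d where "d = gcd p q"
  have "degree d = 0"
  proof (rule ccontr)
    assume "degree d \<noteq> 0"
    then obtain z where "poly d z = 0"
      by (metis fundamental_theorem_of_algebra constant_degree)
    moreover have "d dvd p" "d dvd q" unfolding d_def by simp_all
    ultimately have "poly p z = 0" "poly q z = 0" by (auto elim!: dvdE)
    then show False using assms(2) by blast
  qed
  moreover have "d \<noteq> 0" unfolding d_def using assms(1) by simp
  ultimately have "is_unit d" by (simp add: is_unit_iff_degree)
  then obtain e where e: "1 = d * e" by (auto elim: dvdE)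
  have bezout: "fst (bezout_coefficients p q) * p + snd (bezout_coefficients p q) * q = d"
    unfolding d_def by (rule bezout_coefficients_fst_snd)
  show ?thesis
    by (intro exI[of _ "e * fst (bezout_coefficients p q)"] exI[of _ "e * snd (bezout_coefficients p q)"])
       (simp add: e algebra_simps flip: bezout)
qed

lemma zeta_pred_sq_in_J:
  assumes "even g" "g \<ge> 2" shows "in_J g (zeta (int g - 1) * zeta (int g - 1))"
proof -
  let ?Z = "zeta (int g - 1)" and ?c1 = "of_int (rec_coeff1 (int g)) :: cpoly2"
    and ?c2 = "of_int (rec_coeff2 (int g)) :: cpoly2"
  have "in_J g (?Z * (?c1 * ?Z + ?c2 * gamma * zeta (int g - 2))
      - (?c2 * zeta (int g - 2)) * (gamma * ?Z))"
    by (intro in_J_diff in_J_mult zeta_pred_relation_in_J gamma_zeta_pred_in_J assms)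
  also have "\<dots> = of_int (rec_coeff1 (int g)) * (?Z * ?Z)"
    by (simp add: algebra_simps)
  finally show ?thesis
    by (rule in_J_cancel_of_int) (use assms in \<open>simp add: rec_coeff1_def\<close>)
qed

lemma zeta_pred_plus_gamma_nilpotent_mod_J:
  assumes "even g" "g \<ge> 2"
  shows "in_J g ((c * zeta (int g - 1) + gamma * r) ^ (g + 2))"
proof -
  define T where "T = g div 2"
  let ?Z = "zeta (int g - 1)" and ?t = "c * zeta (int g - 1) + gamma * r"
  have "in_J g ((c * c) * (?Z * ?Z) + (2 * c * r) * (gamma * ?Z))"
    by (rule in_J_add[OF in_J_mult[OF zeta_pred_sq_in_J] in_J_mult[OF gamma_zeta_pred_in_J]])
       (use assms in simp_all)
  also have "(c * c) * (?Z * ?Z) + (2 * c * r) * (gamma * ?Z) = ?t\<^sup>2 - (gamma * r)\<^sup>2"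
    by (simp add: algebra_simps power2_eq_square)
  finally have "in_J g ((?t\<^sup>2) ^ (T + 1) - ((gamma * r)\<^sup>2) ^ (T + 1))"
    by (rule in_J_pow_diff)
  moreover have "in_J g (((gamma * r)\<^sup>2) ^ (T + 1))"
  proof -
    have "in_J g (gamma ^ (T + 1) * zeta (int g - int g))"
      by (rule gamma_pow_zeta_in_J) (use assms in \<open>auto simp: T_def\<close>)
    then have "in_J g ((gamma ^ (T + 1) * (r\<^sup>2) ^ (T + 1)) * gamma ^ (T + 1))"
      by (simp add: zeta_def in_J_mult)
    also have "\<dots> = ((gamma * r)\<^sup>2) ^ (T + 1)"
      by (simp add: power_mult_distrib power2_eq_square ac_simps)
    finally show ?thesis .
  qed
  ultimately have "in_J g ((?t\<^sup>2) ^ (T + 1))"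
    using in_J_add by fastforce
  moreover have "g + 2 = 2 * (T + 1)" using assms unfolding T_def by auto
  ultimately show ?thesis by (simp only: power_mult)
qed

text \<open>
  A Bezout identity against \<open>\<zeta>\<^sup>+\<^sub>g\<^sub>-\<^sub>1(\<alpha>, 0)\<close> writes \<open>a u = 1 - t\<close> with
  \<open>t = b \<zeta>\<^sup>+\<^sub>g\<^sub>-\<^sub>1 + \<gamma> r\<close>, and \<open>t\<close> is nilpotent modulo \<open>J\<^sup>+\<^sub>g\<close>.
\<close>

lemma unit_mod_J_if_no_imaginary_root:
  assumes "even g" "g \<ge> 2"
    and no_root: "\<And>z s. s \<ge> 0 \<Longrightarrow> z\<^sup>2 = - complex_of_real s \<Longrightarrow> eval_at z u \<noteq> 0"
  shows "unit_mod_J g u"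
proof -
  have g: "g - 1 = 2 * (g div 2 - 1) + 1" using assms by auto
  let ?Z = "zeta (int g - 1)"
  obtain P z1 where Z: "?Z = pCons P z1" by (cases ?Z)
  have "?Z = zeta_nat (g - 1)" using assms(2) unfolding zeta_def by (simp add: nat_diff_distrib)
  then have P: "P = zeta_gamma0 (g - 1)" using Z unfolding zeta_gamma0_def by (metis coeff_pCons_0)
  obtain p u1 where u: "u = pCons p u1" by (cases u)
  have no_common_root: "poly p z \<noteq> 0" if "poly P z = 0" for z
  proof -
    from that have "poly (zeta_gamma0 (2 * (g div 2 - 1) + 1)) z = 0" unfolding P g .
    then obtain s where "s \<ge> 0" "z\<^sup>2 = - complex_of_real s"
      using zeta_gamma0_odd_roots by blast
    then show ?thesis using no_root unfolding u eval_at_def by simp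
  qed
  have "P \<noteq> 0" unfolding P g by (rule zeta_gamma0_odd_nonzero)
  from bezout_if_no_common_root[OF this no_common_root]
  obtain a b where ab: "a * p + b * P = 1" by blast
  have "u * [:a:] = pCons (a * p) (smult a u1)"
    unfolding u by (simp add: mult.commute)
  also have "\<dots> = 1 - ([:b:] * ?Z + gamma * (- smult a u1 - smult b z1))"
    unfolding Z gamma_def using ab by (simp add: one_pCons algebra_simps)
  finally have ua: "u * [:a:] = 1 - ([:b:] * ?Z + gamma * (- smult a u1 - smult b z1))" .
  have "unit_mod_J g (u * [:a:])"
    unfolding ua by (rule unit_mod_J_one_minus_nilpotent[OF zeta_pred_plus_gamma_nilpotent_mod_J[OF assms(1,2)]])
  then show ?thesis by (rule unit_mod_J_factor)
qed

definition gzeta_odd :: "nat \<Rightarrow> nat \<Rightarrow> cpoly2" where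
  "gzeta_odd g i = gamma ^ i * zeta (int g - 2 * int i - 1)"

definition gzeta_even :: "nat \<Rightarrow> nat \<Rightarrow> cpoly2" where
  "gzeta_even g i = gamma ^ (i + 1) * zeta (int g - 2 * int i - 2)"

lemma gzeta_odd_vanish: "g \<le> 2 * i \<Longrightarrow> gzeta_odd g i = 0"
  unfolding gzeta_odd_def by (simp add: zeta_neg)

lemma gzeta_even_vanish: "g \<le> 2 * i \<Longrightarrow> gzeta_even g i = 0"
  unfolding gzeta_even_def by (simp add: zeta_neg)

lemma gzeta_even_rec:
  assumes "even g" "2 * i + 3 \<le> g"
  shows "gzeta_even g i = alpha * gzeta_odd g (i + 1)
    + of_int (rec_coeff2 (int g - 2 * int i - 3)) * gzeta_odd g (i + 2)"
proof -
  let ?K = "int g - 2 * int i - 3"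
  have "zeta (?K + 1) = alpha * zeta ?K + of_int (rec_coeff2 ?K) * gamma * zeta (?K - 2)"
    using zeta_rec[of ?K] assms by simp
  then have "zeta (int g - 2 * int i - 2) = alpha * zeta (int g - 2 * int (i + 1) - 1)
      + of_int (rec_coeff2 ?K) * gamma * zeta (int g - 2 * int (i + 2) - 1)"
    by simp
  then show ?thesis unfolding gzeta_odd_def gzeta_even_def by (simp add: algebra_simps)
qed

lemma gamma_gzeta_odd_rec:
  assumes "even g" "2 * i + 2 \<le> g"
  shows "gamma * gzeta_odd g i = alpha * gzeta_even g i
    + of_int (rec_coeff1 (int g - 2 * int i - 2)) * gzeta_odd g (i + 1)
    + of_int (rec_coeff2 (int g - 2 * int i - 2)) * gzeta_even g (i + 1)"
proof -
  let ?K = "int g - 2 * int i - 2"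
  have "zeta (?K + 1) = alpha * zeta ?K + of_int (rec_coeff1 ?K) * zeta (?K - 1)
      + of_int (rec_coeff2 ?K) * gamma * zeta (?K - 2)"
    using zeta_rec[of ?K] assms by simp
  then have "zeta (int g - 2 * int i - 1) = alpha * zeta (int g - 2 * int i - 2)
      + of_int (rec_coeff1 ?K) * zeta (int g - 2 * int (i + 1) - 1)
      + of_int (rec_coeff2 ?K) * gamma * zeta (int g - 2 * int (i + 1) - 2)"
    by simp
  then show ?thesis unfolding gzeta_odd_def gzeta_even_def by (simp add: algebra_simps)
qed

lemma gzeta_relation_in_J:
  assumes "even g" "2 * i + 2 \<le> g"
  shows "in_J g (alpha * gzeta_even g i
    + of_int (rec_coeff1 (int g - 2 * int i - 2)) * gzeta_odd g (i + 1)
    + of_int (rec_coeff2 (int g - 2 * int i - 2)) * gzeta_even g (i + 1))"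
proof -
  have "in_J g (gamma ^ (i + 1) * zeta (int g - int (2 * i + 1)))"
    by (rule gamma_pow_zeta_in_J) (use assms in simp_all)
  then have "in_J g (gamma * gzeta_odd g i)"
    unfolding gzeta_odd_def by (simp add: algebra_simps)
  then show ?thesis by (simp only: gamma_gzeta_odd_rec[OF assms])
qed

section \<open>Ratios modulo \<open>J\<^sup>+\<^sub>g\<close>\<close>

text \<open>
  Modulo \<open>J\<^sup>+\<^sub>g\<close>, \<open>n/d\<close> represents \<open>\<gamma>\<^sup>i\<^sup>+\<^sup>1 \<zeta>\<^sup>+\<^sub>g\<^sub>-\<^sub>2\<^sub>i\<^sub>-\<^sub>2 / \<gamma>\<^sup>i \<zeta>\<^sup>+\<^sub>g\<^sub>-\<^sub>2\<^sub>i\<^sub>-\<^sub>1\<close>, and \<open>n'/d'\<close> the ratio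
  of \<open>\<gamma>\<^sup>i\<^sup>+\<^sup>1 \<zeta>\<^sup>+\<^sub>g\<^sub>-\<^sub>2\<^sub>i\<^sub>-\<^sub>3\<close> to \<open>\<gamma>\<^sup>i \<zeta>\<^sup>+\<^sub>g\<^sub>-\<^sub>2\<^sub>i\<^sub>-\<^sub>1\<close>, up to a factor \<open>\<alpha>\<close> on the denominator (\<open>i\<close> even)
  or the numerator (\<open>i\<close> odd). The parameter \<open>a2\<close> stands for \<open>\<alpha>\<^sup>2\<close>:
  all entries are polynomials in \<open>\<alpha>\<^sup>2\<close>, so they can be evaluated at \<open>\<alpha>\<^sup>2 = -s\<close> over the reals.
\<close>

fun ratio_data :: "'a::comm_ring_1 \<Rightarrow> nat \<Rightarrow> nat \<Rightarrow> 'a \<times> 'a \<times> 'a \<times> 'a" where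
  "ratio_data a2 g 0 = (- of_int (8 * int g), of_int (int g - 1), -1, of_int (rec_coeff2 (int g - 1)))"
| "ratio_data a2 g (Suc i) = (case ratio_data a2 g i of (n, d, n', d') \<Rightarrow>
    if even i then
      (- (n * d' + of_int (rec_coeff1 (int g - 2 * int i - 2)) * d * n'),
       of_int (rec_coeff2 (int g - 2 * int i - 2)) * d * n',
       (d' * n - a2 * d * n') * d',
       of_int (rec_coeff2 (int g - 2 * int i - 3)) * d * d' * n')
    else
      (- (d' * (a2 * d' * n + of_int (rec_coeff1 (int g - 2 * int i - 2)) * d * n')),
       of_int (rec_coeff2 (int g - 2 * int i - 2)) * d * d' * n',
       (d' * n - d * n') * d',
       of_int (rec_coeff2 (int g - 2 * int i - 3)) * d * d' * n'))"

lemma ratio_step_even: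
  assumes h1: "in_J g (D * B0 - N * A0)" and h2: "in_J g (D' * A1 - alpha * N' * A0)"
    and rec: "B0 = alpha * A1 + c3 * A2" and rel: "in_J g (alpha * B0 + c1 * A1 + c2 * B1)"
  shows "in_J g ((c2 * D * N') * B1 - (- (N * D' + c1 * D * N')) * A1)"
    and "in_J g ((c3 * D * D' * N') * alpha * A2 - ((D' * N - alpha\<^sup>2 * D * N') * D') * A1)"
proof -
  have "in_J g (D * N' * (alpha * B0 + c1 * A1 + c2 * B1) - N' * alpha * (D * B0 - N * A0)
      + N * (D' * A1 - alpha * N' * A0))"
    by (intro in_J_add in_J_diff in_J_mult h1 h2 rel)
  also have "\<dots> = (c2 * D * N') * B1 - (- (N * D' + c1 * D * N')) * A1"
    by (simp add: algebra_simps)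
  finally show "in_J g ((c2 * D * N') * B1 - (- (N * D' + c1 * D * N')) * A1)" .
  have "in_J g (D' * (N' * alpha * (D * B0 - N * A0) - N * (D' * A1 - alpha * N' * A0)))"
    by (intro in_J_mult in_J_diff h1 h2)
  also have "\<dots> = (c3 * D * D' * N') * alpha * A2 - ((D' * N - alpha\<^sup>2 * D * N') * D') * A1"
    unfolding rec by (simp add: algebra_simps power2_eq_square)
  finally show "in_J g ((c3 * D * D' * N') * alpha * A2 - ((D' * N - alpha\<^sup>2 * D * N') * D') * A1)" .
qed

lemma ratio_step_odd:
  assumes h1: "in_J g (D * B0 - N * A0)" and h2: "in_J g (D' * alpha * A1 - N' * A0)"
    and rec: "B0 = alpha * A1 + c3 * A2" and rel: "in_J g (alpha * B0 + c1 * A1 + c2 * B1)"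
  shows "in_J g ((c2 * D * D' * N') * B1 - (- (D' * (alpha\<^sup>2 * D' * N + c1 * D * N'))) * A1)"
    and "in_J g ((c3 * D * D' * N') * A2 - alpha * ((D' * N - D * N') * D') * A1)"
proof -
  have "in_J g (D * D' * N' * (alpha * B0 + c1 * A1 + c2 * B1)
      - alpha * D' * (N' * (D * B0 - N * A0) - N * (D' * alpha * A1 - N' * A0)))"
    by (intro in_J_diff in_J_mult h1 h2 rel)
  also have "\<dots> = (c2 * D * D' * N') * B1 - (- (D' * (alpha\<^sup>2 * D' * N + c1 * D * N'))) * A1"
    by (simp add: algebra_simps power2_eq_square)
  finally show "in_J g ((c2 * D * D' * N') * B1 - (- (D' * (alpha\<^sup>2 * D' * N + c1 * D * N'))) * A1)" .
  have "in_J g (D' * (N' * (D * B0 - N * A0) - N * (D' * alpha * A1 - N' * A0)))"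
    by (intro in_J_mult in_J_diff h1 h2)
  also have "\<dots> = (c3 * D * D' * N') * A2 - alpha * ((D' * N - D * N') * D') * A1"
    unfolding rec by (simp add: algebra_simps)
  finally show "in_J g ((c3 * D * D' * N') * A2 - alpha * ((D' * N - D * N') * D') * A1)" .
qed

lemma ratio_data_congs:
  assumes "even g" "2 * i + 2 \<le> g" "ratio_data (alpha\<^sup>2) g i = (N, D, N', D')"
  shows "in_J g (D * gzeta_even g i - N * gzeta_odd g i) \<and>
    (if even i then in_J g (D' * gzeta_odd g (i + 1) - alpha * N' * gzeta_odd g i)
     else in_J g (D' * alpha * gzeta_odd g (i + 1) - N' * gzeta_odd g i))"
  using assms(2,3)
proof (induction i arbitrary: N D N' D')
  case 0
  then have g: "g \<ge> 2" and vals: "N = - of_int (8 * int g)" "D = of_int (int g - 1)" "N' = -1"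
    "D' = of_int (rec_coeff2 (int g - 1))"
    by auto
  have "in_J g (of_int (rec_coeff1 (int g)) * zeta (int g - 1)
      + of_int (rec_coeff2 (int g)) * gamma * zeta (int g - 2))"
    by (rule zeta_pred_relation_in_J[OF assms(1)])
  also have "\<dots> = of_int (2 * int g) * (D * gzeta_even g 0 - N * gzeta_odd g 0)"
    unfolding vals gzeta_odd_def gzeta_even_def rec_coeff1_def rec_coeff2_def
    by (simp add: algebra_simps power2_eq_square)
  finally have "in_J g (D * gzeta_even g 0 - N * gzeta_odd g 0)"
    by (rule in_J_cancel_of_int) (use g in simp)
  moreover have "D' * gzeta_odd g 1 - alpha * N' * gzeta_odd g 0 = zeta (int g)"
    using zeta_rec[of "int g - 1"] g assms(1)
    unfolding vals gzeta_odd_def by (simp add: algebra_simps)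
  ultimately show ?case using in_J_generators(1) by simp
next
  case (Suc i)
  obtain N0 D0 N0' D0' where e: "ratio_data (alpha\<^sup>2) g i = (N0, D0, N0', D0')"
    by (cases "ratio_data (alpha\<^sup>2) g i") auto
  let ?A = "gzeta_odd g" and ?B = "gzeta_even g"
  have h: "in_J g (D0 * ?B i - N0 * ?A i)"
    "if even i then in_J g (D0' * ?A (i + 1) - alpha * N0' * ?A i)
     else in_J g (D0' * alpha * ?A (i + 1) - N0' * ?A i)"
    using Suc.IH[OF _ e] Suc.prems(1) by auto
  have rec: "?B i = alpha * ?A (i + 1) + of_int (rec_coeff2 (int g - 2 * int i - 3)) * ?A (i + 2)"
    using gzeta_even_rec[OF assms(1)] Suc.prems(1) by simp
  have rel: "in_J g (alpha * ?B i + of_int (rec_coeff1 (int g - 2 * int i - 2)) * ?A (i + 1)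
      + of_int (rec_coeff2 (int g - 2 * int i - 2)) * ?B (i + 1))"
    using gzeta_relation_in_J[OF assms(1)] Suc.prems(1) by simp
  show ?case
  proof (cases "even i")
    case True
    then have "in_J g (D0' * ?A (i + 1) - alpha * N0' * ?A i)" using h(2) by simp
    note step = ratio_step_even[OF h(1) this rec rel]
    show ?thesis using step True Suc.prems(2) e by (auto simp: ac_simps)
  next
    case False
    then have "in_J g (D0' * alpha * ?A (i + 1) - N0' * ?A i)" using h(2) by simp
    note step = ratio_step_odd[OF h(1) this rec rel]
    show ?thesis using step False Suc.prems(2) e by (auto simp: ac_simps)
  qed
qed

section \<open>Evaluation on \<open>\<alpha>\<^sup>2 \<le> 0\<close>, \<open>\<gamma> = 0\<close>\<close>

lemma ratio_data_map:
  assumes "\<And>x y. f (x + y) = f x + f y" "\<And>x y. f (x * y) = f x * f y"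
    "\<And>x. f (- x) = - f x" "\<And>x y. f (x - y) = f x - f y" "\<And>k. f (of_int k) = of_int k"
  shows "map_prod f (map_prod f (map_prod f f)) (ratio_data a2 g i) = ratio_data (f a2) g i"
proof (induction i)
  case 0
  have "f 1 = 1" using assms(5)[of 1] by simp
  then show ?case by (simp only: ratio_data.simps map_prod_simp assms(3,5))
next
  case (Suc i)
  obtain n d n' d' where e: "ratio_data a2 g i = (n, d, n', d')" by (cases "ratio_data a2 g i") auto
  with Suc have "ratio_data (f a2) g i = (f n, f d, f n', f d')" by simp
  with e show ?case using assms by simp
qed

lemma ratio_data_eval_at:
  assumes "z\<^sup>2 = - complex_of_real s" "ratio_data (alpha\<^sup>2) g i = (N, D, N', D')"
    "ratio_data (- s) g i = (n, d, n', d')"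
  shows "eval_at z N = of_real n" "eval_at z D = of_real d"
    "eval_at z N' = of_real n'" "eval_at z D' = of_real d'"
proof -
  have "map_prod (eval_at z) (map_prod (eval_at z) (map_prod (eval_at z) (eval_at z)))
      (ratio_data (alpha\<^sup>2) g i) = ratio_data (complex_of_real (- s)) g i"
    using ratio_data_map[of "eval_at z"] assms(1) by (simp add: eval_at_simps)
  also have "\<dots> = map_prod of_real (map_prod of_real (map_prod of_real of_real)) (ratio_data (- s) g i)"
    by (rule ratio_data_map[symmetric]) simp_all
  finally show "eval_at z N = of_real n" "eval_at z D = of_real d"
    "eval_at z N' = of_real n'" "eval_at z D' = of_real d'"
    using assms(2,3) by simp_all
qed

lemma ratio_signs_step_even:
  fixes s n d n' d' c1 c2 c3 :: real
  assumes "s \<ge> 0" "n * d < 0" "n' * d' < 0" "c1 > 0" "c2 > 0" "c3 \<ge> 0"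
  shows "(- (n * d' + c1 * d * n')) * (c2 * d * n') < 0"
    and "(d' * n + s * d * n') * d' \<noteq> 0"
    and "c3 > 0 \<Longrightarrow> ((d' * n + s * d * n') * d') * (c3 * d * d' * n') > 0"
proof -
  have P: "(n * d) * (n' * d') > 0" using assms(2,3) by (simp add: mult_neg_neg)
  have "d' \<noteq> 0" "d * n' \<noteq> 0" using assms(2,3) by auto
  then have sq: "(d * n')\<^sup>2 > 0" "d'\<^sup>2 > 0" by simp_all
  have Q: "(n * d) * (n' * d') + c1 * (d * n')\<^sup>2 > 0" and R: "(n * d) * (n' * d') + s * (d * n')\<^sup>2 > 0"
    using P sq assms(1,4) by (simp_all add: add_pos_pos add_pos_nonneg)
  have "(- (n * d' + c1 * d * n')) * (c2 * d * n') = - (c2 * ((n * d) * (n' * d') + c1 * (d * n')\<^sup>2))"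
    by (simp add: algebra_simps power2_eq_square)
  then show "(- (n * d' + c1 * d * n')) * (c2 * d * n') < 0" using Q assms(5) by simp
  have "((d' * n + s * d * n') * d') * (d * n') = d' * ((n * d) * (n' * d') + s * (d * n')\<^sup>2)"
    by (simp add: algebra_simps power2_eq_square)
  then show "(d' * n + s * d * n') * d' \<noteq> 0" using R \<open>d' \<noteq> 0\<close> by auto
  have eq: "((d' * n + s * d * n') * d') * (c3 * d * d' * n') = c3 * d'\<^sup>2 * ((n * d) * (n' * d') + s * (d * n')\<^sup>2)"
    by (simp add: algebra_simps power2_eq_square)
  show "c3 > 0 \<Longrightarrow> ((d' * n + s * d * n') * d') * (c3 * d * d' * n') > 0"
    unfolding eq using R sq by simp
qed

lemma ratio_signs_step_odd:
  fixes s n d n' d' c1 c2 c3 :: real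
  assumes "s \<ge> 0" "n * d < 0" "n' * d' > 0" "c1 > 0" "c2 > 0" "c3 \<ge> 0"
  shows "(- (d' * (c1 * d * n' - s * d' * n))) * (c2 * d * d' * n') < 0"
    and "(d' * n - d * n') * d' \<noteq> 0"
    and "c3 > 0 \<Longrightarrow> ((d' * n - d * n') * d') * (c3 * d * d' * n') < 0"
proof -
  have P: "(n * d) * (n' * d') < 0" using assms(2,3) by (simp add: mult_neg_pos)
  have "d' \<noteq> 0" "d * n' \<noteq> 0" using assms(2,3) by auto
  then have sq: "(d * n')\<^sup>2 > 0" "d'\<^sup>2 > 0" by simp_all
  have Q: "c1 * (d * n')\<^sup>2 - s * ((n * d) * (n' * d')) > 0"
    using P sq assms(1,4) by (smt (verit) mult_nonneg_nonpos mult_pos_pos)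
  have R: "(n * d) * (n' * d') - (d * n')\<^sup>2 < 0" using P sq by linarith
  have eq1: "(- (d' * (c1 * d * n' - s * d' * n))) * (c2 * d * d' * n')
      = - (c2 * d'\<^sup>2 * (c1 * (d * n')\<^sup>2 - s * ((n * d) * (n' * d'))))"
    by (simp add: algebra_simps power2_eq_square)
  show "(- (d' * (c1 * d * n' - s * d' * n))) * (c2 * d * d' * n') < 0"
    unfolding eq1 using Q sq assms(5) by simp
  have "((d' * n - d * n') * d') * (d * n') = d' * ((n * d) * (n' * d') - (d * n')\<^sup>2)"
    by (simp add: algebra_simps power2_eq_square)
  then show "(d' * n - d * n') * d' \<noteq> 0" using R \<open>d' \<noteq> 0\<close> by auto
  have eq3: "((d' * n - d * n') * d') * (c3 * d * d' * n') = c3 * d'\<^sup>2 * ((n * d) * (n' * d') - (d * n')\<^sup>2)"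
    by (simp add: algebra_simps power2_eq_square)
  show "c3 > 0 \<Longrightarrow> ((d' * n - d * n') * d') * (c3 * d * d' * n') < 0"
    unfolding eq3 using R sq by (simp add: mult_pos_neg)
qed

lemma ratio_data_signs:
  fixes s :: real
  assumes "s \<ge> 0"
  shows "2 * i + 2 \<le> g \<Longrightarrow> ratio_data (- s) g i = (n, d, n', d') \<Longrightarrow>
    n * d < 0 \<and> n' \<noteq> 0 \<and> (2 * i + 4 \<le> g \<longrightarrow> (if even i then n' * d' < 0 else n' * d' > 0))"
proof (induction i arbitrary: n d n' d')
  case 0
  then have "real g \<ge> 2" and "n = - 8 * g" "d = g - 1" "n' = -1" "d' = 2 * (real g - 1) * (real g - 2)"
    by (auto simp: rec_coeff2_def)
  then show ?case by (auto simp: mult_pos_pos mult_neg_pos)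
next
  case (Suc i)
  obtain n0 d0 n0' d0' where e: "ratio_data (- s) g i = (n0, d0, n0', d0')"
    by (cases "ratio_data (- s) g i") auto
  have IH: "n0 * d0 < 0" "if even i then n0' * d0' < 0 else n0' * d0' > 0"
    using Suc.IH[OF _ e] Suc.prems(1) by auto
  define c1 c2 c3 where "c1 = real_of_int (rec_coeff1 (int g - 2 * int i - 2))"
    and "c2 = real_of_int (rec_coeff2 (int g - 2 * int i - 2))"
    and "c3 = real_of_int (rec_coeff2 (int g - 2 * int i - 3))"
  have c: "c1 > 0" "c2 > 0" "c3 \<ge> 0" "2 * Suc i + 4 \<le> g \<Longrightarrow> c3 > 0"
    using Suc.prems(1) unfolding c1_def c2_def c3_def rec_coeff1_def rec_coeff2_def
    by (auto simp: mult_pos_pos)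
  show ?case
  proof (cases "even i")
    case True
    then have "n = - (n0 * d0' + c1 * d0 * n0')" "d = c2 * d0 * n0'"
      "n' = (d0' * n0 + s * d0 * n0') * d0'" "d' = c3 * d0 * d0' * n0'"
      using Suc.prems(2) e unfolding c1_def c2_def c3_def by auto
    then show ?thesis
      using ratio_signs_step_even[OF assms IH(1) _ c(1-3)] IH(2) c(4) True by auto
  next
    case False
    then have "n = - (d0' * (c1 * d0 * n0' - s * d0' * n0))" "d = c2 * d0 * d0' * n0'"
      "n' = (d0' * n0 - d0 * n0') * d0'" "d' = c3 * d0 * d0' * n0'"
      using Suc.prems(2) e unfolding c1_def c2_def c3_def by (auto simp: algebra_simps)
    then show ?thesis
      using ratio_signs_step_odd[OF assms IH(1) _ c(1-3)] IH(2) c(4) False by auto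
  qed
qed

lemma ratio_data_units:
  assumes "even g" "2 * i + 2 \<le> g" "ratio_data (alpha\<^sup>2) g i = (N, D, N', D')"
  shows "unit_mod_J g N" "unit_mod_J g D" "unit_mod_J g N'" "2 * i + 4 \<le> g \<Longrightarrow> unit_mod_J g D'"
proof -
  have no_root: "eval_at z N \<noteq> 0 \<and> eval_at z D \<noteq> 0 \<and> eval_at z N' \<noteq> 0 \<and>
      (2 * i + 4 \<le> g \<longrightarrow> eval_at z D' \<noteq> 0)"
    if "s \<ge> 0" "z\<^sup>2 = - complex_of_real s" for z s
  proof -
    obtain n d n' d' where e: "ratio_data (- s) g i = (n, d, n', d')"
      by (cases "ratio_data (- s) g i") auto
    show ?thesis
      using ratio_data_signs[OF that(1) assms(2) e] ratio_data_eval_at[OF that(2) assms(3) e]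
      by (auto split: if_splits)
  qed
  have g: "g \<ge> 2" using assms(2) by simp
  show "unit_mod_J g N" "unit_mod_J g D" "unit_mod_J g N'" "2 * i + 4 \<le> g \<Longrightarrow> unit_mod_J g D'"
    by (rule unit_mod_J_if_no_imaginary_root[OF assms(1) g]; use no_root in blast)+
qed

lemma cong_J_of_ratio:
  assumes "in_J k (D * y - N * x)" "in_J k (D * v - 1)"
  shows "cong_J k (N * v * x) y"
proof -
  have "in_J k ((- v) * (D * y - N * x) + y * (D * v - 1))"
    using assms by (intro in_J_add in_J_mult)
  then show ?thesis unfolding cong_J_def by (simp add: algebra_simps)
qed

lemma gzeta_odd_even_cong:
  assumes "even g" "2 * i + 2 \<le> g"
  shows "\<exists>w. unit_mod_J g w \<and> cong_J g (w * gzeta_odd g i) (gzeta_even g i)"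
proof -
  obtain N D N' D' where e: "ratio_data (alpha\<^sup>2) g i = (N, D, N', D')"
    by (cases "ratio_data (alpha\<^sup>2) g i") auto
  note units = ratio_data_units[OF assms e]
  obtain v where v: "in_J g (D * v - 1)" using units(2) unfolding unit_mod_J_iff by blast
  have "cong_J g (N * v * gzeta_odd g i) (gzeta_even g i)"
    using ratio_data_congs[OF assms e] by (intro cong_J_of_ratio[OF _ v]) simp
  then show ?thesis using unit_mod_J_mult[OF units(1) unit_mod_J_inverse[OF v]] by blast
qed

lemma gzeta_odd_shift_cong:
  assumes "even g" "2 * i + 2 \<le> g"
  shows "\<exists>x. unit_mod_J g x \<and>
      (if even i then cong_J g (alpha * x * gzeta_odd g i) (gzeta_odd g (i + 1))
       else cong_J g (x * gzeta_odd g i) (alpha * gzeta_odd g (i + 1)))"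
proof -
  let ?A = "gzeta_odd g"
  obtain N D N' D' where e: "ratio_data (alpha\<^sup>2) g i = (N, D, N', D')"
    by (cases "ratio_data (alpha\<^sup>2) g i") auto
  note congs = ratio_data_congs[OF assms e] and units = ratio_data_units[OF assms e]
  show ?thesis
  proof (cases "2 * i + 4 \<le> g")
    case True
    obtain v where v: "in_J g (D' * v - 1)" using units(4)[OF True] unfolding unit_mod_J_iff by blast
    have "if even i then cong_J g (N' * v * (alpha * ?A i)) (?A (i + 1))
        else cong_J g (N' * v * ?A i) (alpha * ?A (i + 1))"
      using congs cong_J_of_ratio[OF _ v, where N = N' and x = "alpha * ?A i" and y = "?A (i + 1)"]
        cong_J_of_ratio[OF _ v, where N = N' and x = "?A i" and y = "alpha * ?A (i + 1)"]
      by (cases "even i") (simp_all add: ac_simps)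
    then show ?thesis
      using unit_mod_J_mult[OF units(3) unit_mod_J_inverse[OF v]] by (auto simp: ac_simps)
  next
    case False
    then have A: "?A (i + 1) = 0" using assms by (intro gzeta_odd_vanish) presburger
    have "in_J g (N' * (if even i then alpha * ?A i else ?A i))"
      using congs unfolding A by (cases "even i") (simp_all add: ac_simps in_J_uminus_iff)
    then have "in_J g (if even i then alpha * ?A i else ?A i)"
      by (rule in_J_cancel_unit[OF units(3)])
    then show ?thesis
      unfolding cong_J_def A by (intro exI[of _ 1]) (simp add: unit_mod_J_1 split: if_splits)
  qed
qed

theorem lemma5p9:
  fixes g i :: nat
  assumes "even g"
  shows "(\<exists>w. unit_mod_J g w \<and>
            cong_J g (w * gamma ^ i * zeta (int g - 2 * int i - 1))
                     (gamma ^ (i + 1) * zeta (int g - 2 * int i - 2)))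
       \<and> (\<exists>x. unit_mod_J g x \<and>
            (if even i
             then cong_J g (alpha * x * gamma ^ i * zeta (int g - 2 * int i - 1))
                           (gamma ^ (i + 1) * zeta (int g - 2 * int i - 3))
             else cong_J g (x * gamma ^ i * zeta (int g - 2 * int i - 1))
                           (alpha * gamma ^ (i + 1) * zeta (int g - 2 * int i - 3))))"
proof -
  have "zeta (int g - 2 * int i - 3) = zeta (int g - 2 * int (i + 1) - 1)" by simp
  then have terms: "\<And>c. c * gamma ^ i * zeta (int g - 2 * int i - 1) = c * gzeta_odd g i"
    "gamma ^ (i + 1) * zeta (int g - 2 * int i - 2) = gzeta_even g i"
    "gamma ^ (i + 1) * zeta (int g - 2 * int i - 3) = gzeta_odd g (i + 1)"
    "alpha * gamma ^ (i + 1) * zeta (int g - 2 * int i - 3) = alpha * gzeta_odd g (i + 1)"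
    unfolding gzeta_odd_def gzeta_even_def by (simp_all add: mult.assoc)
  show ?thesis
  proof (cases "g \<le> 2 * i")
    case True
    then show ?thesis
      unfolding terms by (simp add: gzeta_odd_vanish gzeta_even_vanish cong_J_def in_J_0)
        (blast intro: unit_mod_J_1)
  next
    case False
    then have "2 * i + 2 \<le> g" using assms by presburger
    then show ?thesis
      unfolding terms using gzeta_odd_even_cong[OF assms] gzeta_odd_shift_cong[OF assms] by blast
  qed
qed

end
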